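(* Fix $(\mathbf{x},t)$, a unit vector $\mathbf{n}\in\mathbb{R}^N$, a real number $V_{\mathbf{n}}$, constants $\nu>0$, $\lambda>0$, $\mathrm{k}>0$, and $\chi\in\{0,1\}$. Let $\widetilde\rho_0>0$, $\widetilde{\mathbf{u}}_0\in\mathbb{R}^N$, $\widetilde\phi_0$, $\widetilde\mu_0$, $\widetilde\theta_0$ be smooth functions of $\xi\in\mathbb{R}$ satisfying \[ \begin{aligned} &-\partial_\xi\widetilde\rho_0\,V_{\mathbf{n}}+\partial_\xi(\widetilde\rho_0\widetilde{\mathbf{u}}_0)\cdot\mathbf{n}=0,\\ &\partial_\xi\big((\nu+\lambda)\partial_\xi\widetilde{\mathbf{u}}_0\cdot\mathbf{n}\big)\mathbf{n}+\partial_\xi(\nu\partial_\xi\widetilde{\mathbf{u}}_0)+\tfrac14\partial_\xi(\widetilde\phi_0^2-1)^2\,\mathbf{n}-\tfrac12\partial_\xi|\partial_\xi\widetilde\phi_0|^2\,\mathbf{n}=0,\\ &\chi\,\widetilde\rho_0\,\partial_\xi\widetilde\phi_0\,(V_{\mathbf{n}}-\widetilde{\mathbf{u}}_0\cdot\mathbf{n})=\widetilde\mu_0,\\ &\widetilde\rho_0\widetilde\mu_0=-\partial_{\xi\xi}\widetilde\phi_0+\widetilde\phi_0^3-\widetilde\phi_0,\\ &\mathrm{k}\,\partial_{\xi\xi}\widetilde\theta_0+\nu|\partial_\xi\widetilde{\mathbf{u}}_0|^2+(\nu+\lambda)|\partial_\xi\widetilde{\mathbf{u}}_0\cdot\mathbf{n}|^2+\chi\,\widetilde\mu_0^2=0,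 \end{aligned} \] with $\widetilde\rho_0(\pm\infty)=\rho_0^\pm>0$, $\widetilde{\mathbf{u}}_0(\pm\infty)=\mathbf{u}_0^\pm$, $\widetilde\phi_0(\pm\infty)=\pm1$, and $\widetilde\phi_0(0)=0$. Then \[ \widetilde\rho_0(\xi)\big(V_{\mathbf{n}}-\widetilde{\mathbf{u}}_0(\xi)\cdot\mathbf{n}\big)=\rho_0^\pm\big(V_{\mathbf{n}}-\mathbf{u}_0^\pm\cdot\mathbf{n}\big)\ \text{for all }\xi,\qquad \widetilde\phi_0(\xi)=\tanh\Big(\frac{\xi}{\sqrt2}\Big),\qquad \partial_\xi\widetilde{\mathbf{u}}_0\equiv0,\quad \partial_\xi\widetilde\theta_0\equiv0, \] and moreover $V_{\mathbf{n}}-\widetilde{\mathbf{u}}_0\cdot\mathbf{n}\equiv0$ if $\chi=1$, while $\partial_\xi\widetilde\rho_0\,(V_{\mathbf{n}}-\widetilde{\mathbf{u}}_0\cdot\mathbf{n})\equiv0$ if $\chi=0$.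
   Context: This is the zeroth-order inner problem of a matched asymptotic expansion near the interface $\{\phi=0\}$ of a compressible Navier–Stokes/Allen–Cahn system, written in the stretched normal variable $\xi=d/\epsilon$ ($d$ the signed distance to the interface). The case $\chi=1$ corresponds to mobility $M_\epsilon=1$ and $\chi=0$ to $M_\epsilon=1/\epsilon$. As part of the matching with the outer expansion, the $\xi$-derivatives of $\widetilde\rho_0,\widetilde{\mathbf{u}}_0,\widetilde\phi_0,\widetilde\theta_0$ tend to $0$ as $\xi\to\pm\infty$. *)

theory Defs
  imports "HOL-Analysis.Analysis"
begin

definition smooth_real :: "(real \<Rightarrow> 'a::real_normed_vector) \<Rightarrow> bool" where
  "smooth_real f \<longleftrightarrow>
     (\<exists>D :: nat \<Rightarrow> real \<Rightarrow> 'a. D 0 = f \<and> (\<forall>k x. (D k has_vector_derivative D (Suc k) x) (at x)))"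

end

(* The energy equation says k \<theta>'' = -(dissipation) \<le> 0, so \<theta>' is nonincreasing; as it vanishes
   at both ends it vanishes identically, and then so does the dissipation: u' = 0 and \<chi> \<mu>^2 = 0,
   hence \<mu> = 0. The phase field therefore solves \<phi>'' = \<phi>^3 - \<phi>. Its first integral
   \<phi>'^2 - (1 - \<phi>^2)^2/2 is constant and vanishes at +\<infinity>, so c = \<phi>'(0) satisfies c^2 = 1/2.
   Then \<phi>' - c (1 - \<phi>^2) solves a linear homogeneous ODE and vanishes at 0, so \<phi> solves the
   Riccati equation \<phi>' = c (1 - \<phi>^2) with \<phi>(0) = 0, i.e. \<phi> = tanh (c \<xi>), and \<phi>(+\<infinity>) = 1
   forces c = 1/\<surd>2. Finally, with u \<equiv> u0 the mass equation reads \<rho>' (V - u0 \<cdot> n) = 0: either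
   V = u0 \<cdot> n or \<rho> is constant. For \<chi> = 1 the \<mu>-equation at 0 gives \<rho> \<phi>' (V - u0 \<cdot> n) = 0
   with \<rho> \<phi>' > 0. *)

theory Submission
  imports Defs
begin

lemma smooth_real_has_vector_derivative:
  assumes "smooth_real f"
  shows "(f has_vector_derivative vector_derivative f (at x)) (at x)"
proof -
  obtain D where "D 0 = f" "\<And>k x. (D k has_vector_derivative D (Suc k) x) (at x)"
    using assms unfolding smooth_real_def by blast
  then have "(f has_vector_derivative D 1 x) (at x)" by (metis One_nat_def)
  then show ?thesis using vector_derivative_at by metis
qed

lemma smooth_real_vector_derivative:
  assumes "smooth_real f"
  shows "smooth_real (\<lambda>x. vector_derivative f (at x))"
proof -
  obtain D where D: "D 0 = f" "\<And>k x. (D k has_vector_derivative D (Suc k) x) (at x)"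
    using assms unfolding smooth_real_def by blast
  then have "D 1 = (\<lambda>x. vector_derivative f (at x))"
    using vector_derivative_at by (metis One_nat_def)
  with D(2) show ?thesis
    unfolding smooth_real_def by (intro exI[of _ "\<lambda>k. D (Suc k)"]) (simp add: One_nat_def)
qed

lemma smooth_real_DERIV:
  fixes f :: "real \<Rightarrow> real"
  assumes "smooth_real f"
  shows "(f has_real_derivative deriv f x) (at x)"
  using smooth_real_has_vector_derivative[OF assms]
  by (simp add: has_real_derivative_iff_has_vector_derivative field_derivative_eq_vector_derivative)

lemma smooth_real_deriv:
  fixes f :: "real \<Rightarrow> real"
  assumes "smooth_real f"
  shows "smooth_real (deriv f)"
  using smooth_real_vector_derivative[OF assms]
  by (simp add: field_derivative_eq_vector_derivative[abs_def])

lemma linear_ode_zero_solution: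
  fixes f a :: "real \<Rightarrow> real"
  assumes f': "\<And>x. (f has_real_derivative a x * f x) (at x)"
    and a: "continuous_on UNIV a" and f0: "f 0 = 0"
  shows "f x = 0"
proof -
  define R where "R = \<bar>x\<bar> + 1"
  have "continuous_on {-R..R} a" using a continuous_on_subset by blast
  then obtain A where A: "\<And>t. t \<in> {-R..R} \<Longrightarrow> (A has_real_derivative a t) (at t within {-R..R})"
    using antiderivative_continuous[of "-R" R a]
    unfolding has_real_derivative_iff_has_vector_derivative by metis
  have "((\<lambda>s. f s * exp (- A s)) has_real_derivative 0) (at t within {-R..R})"
    if t: "t \<in> {-R..R}" for t
  proof -
    have "((\<lambda>s. exp (- A s)) has_real_derivative exp (- A t) * - a t) (at t within {-R..R})"
      using DERIV_chain2[OF DERIV_exp DERIV_minus[OF A[OF t]]] by simp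
    from DERIV_mult[OF has_field_derivative_at_within[OF f'] this] show ?thesis
      by (rule DERIV_cong) (simp add: algebra_simps)
  qed
  moreover have "convex {-R..R}" by (rule convex_real_interval)
  ultimately obtain k where k: "\<forall>t\<in>{-R..R}. f t * exp (- A t) = k"
    using has_field_derivative_zero_constant[of "{-R..R}" "\<lambda>s. f s * exp (- A s)"] by blast
  have "0 \<in> {-R..R}" "x \<in> {-R..R}" unfolding R_def by auto
  with k f0 have "f x * exp (- A x) = 0" by force
  then show ?thesis by simp
qed

lemma tanh_ode_unique:
  fixes f :: "real \<Rightarrow> real"
  assumes f': "\<And>x. (f has_real_derivative c * (1 - f x ^ 2)) (at x)" and f0: "f 0 = 0"
  shows "f x = tanh (c * x)"
proof -
  have tanh': "((\<lambda>x. tanh (c * x)) has_real_derivative c * (1 - tanh (c * x) ^ 2)) (at x)" for x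
    by (auto intro!: derivative_eq_intros simp: cosh_real_pos[THEN less_imp_neq, symmetric])
  have diff': "((\<lambda>x. f x - tanh (c * x)) has_real_derivative
          (- c * (f x + tanh (c * x))) * (f x - tanh (c * x))) (at x)" for x
    using DERIV_diff[OF f' tanh'] by (rule DERIV_cong) (simp add: algebra_simps power2_eq_square)
  have "continuous_on UNIV f"
    using f' by (meson DERIV_isCont continuous_at_imp_continuous_on)
  then have "continuous_on UNIV (\<lambda>x. - c * (f x + tanh (c * x)))"
    by (intro continuous_intros) auto
  from linear_ode_zero_solution[OF diff' this] f0 have "f x - tanh (c * x) = 0" by simp
  then show ?thesis by simp
qed

lemma has_vector_derivative_zero_imp_constant:
  fixes f :: "real \<Rightarrow> 'a::real_normed_vector"
  assumes "\<And>x. (f has_vector_derivative 0) (at x)"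
  shows "f = (\<lambda>_. f 0)"
proof -
  obtain c where "\<And>x. x \<in> UNIV \<Longrightarrow> f x = c"
    using has_vector_derivative_zero_constant[OF convex_UNIV] assms by metis
  then show ?thesis by auto
qed

lemma DERIV_zero_tendsto_eq:
  fixes f :: "real \<Rightarrow> real"
  assumes "\<And>x. (f has_real_derivative 0) (at x)" and "(f \<longlongrightarrow> L) F" and "F \<noteq> bot"
  shows "f x = L"
proof -
  have "f = (\<lambda>_. f x)" using assms(1) DERIV_isconst_all by blast
  with assms(2,3) show ?thesis by (metis tendsto_const_iff)
qed

lemma antimono_tendsto_zero_at_top_at_bot:
  fixes g :: "'a::linorder \<Rightarrow> 'b::{linorder_topology,zero}"
  assumes "antimono g" and "(g \<longlongrightarrow> 0) at_top" and "(g \<longlongrightarrow> 0) at_bot"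
  shows "g x = 0"
proof (rule order.antisym)
  have "eventually (\<lambda>y. g y \<le> g x) at_top"
    using assms(1) unfolding eventually_at_top_linorder antimono_def by blast
  from tendsto_upperbound[OF assms(2) this] show "0 \<le> g x" by simp
  have "eventually (\<lambda>y. g x \<le> g y) at_bot"
    using assms(1) unfolding eventually_at_bot_linorder antimono_def by blast
  from tendsto_lowerbound[OF assms(3) this] show "g x \<le> 0" by simp
qed

lemma steady_heat_balance_no_dissipation:
  fixes \<theta> d :: "real \<Rightarrow> real"
  assumes "smooth_real \<theta>" and "k > 0"
    and balance: "\<And>x. k * deriv (deriv \<theta>) x + d x = 0" and "\<And>x. d x \<ge> 0"
    and "(deriv \<theta> \<longlongrightarrow> 0) at_top" and "(deriv \<theta> \<longlongrightarrow> 0) at_bot"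
  shows "deriv \<theta> x = 0" and "d x = 0"
proof -
  have \<theta>'': "(deriv \<theta> has_real_derivative deriv (deriv \<theta>) x) (at x)" for x
    using smooth_real_DERIV[OF smooth_real_deriv[OF assms(1)]] .
  have "deriv (deriv \<theta>) x \<le> 0" for x
    using balance[of x] assms(2) assms(4)[of x] by (smt (verit) mult_pos_pos)
  then have "antimono (deriv \<theta>)"
    using DERIV_nonpos_imp_nonincreasing \<theta>'' by (metis antimonoI)
  with assms(5,6) have \<theta>'_zero: "\<And>x. deriv \<theta> x = 0"
    by (metis antimono_tendsto_zero_at_top_at_bot)
  then show "deriv \<theta> x = 0" .
  have "deriv (deriv \<theta>) x = 0"
    using DERIV_unique[OF \<theta>''[of x]] by (simp add: \<theta>'_zero[abs_def])
  with balance[of x] show "d x = 0" by simp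
qed

lemma DERIV_times_const_zero_tendsto:
  fixes f :: "real \<Rightarrow> real"
  assumes "\<And>x. (f has_real_derivative f' x) (at x)" and "\<And>x. f' x * c = 0"
    and "(f \<longlongrightarrow> L) F" and "F \<noteq> bot"
  shows "f x * c = L * c"
proof (cases "c = 0")
  case False
  then have "(f has_real_derivative 0) (at y)" for y
    using assms(1,2) by (metis mult_eq_0_iff)
  with assms(3,4) show ?thesis using DERIV_zero_tendsto_eq by metis
qed simp

lemma double_well_riccati:
  fixes \<phi> \<phi>' :: "real \<Rightarrow> real"
  assumes \<phi>': "\<And>x. (\<phi> has_real_derivative \<phi>' x) (at x)"
    and \<phi>'': "\<And>x. (\<phi>' has_real_derivative \<phi> x ^ 3 - \<phi> x) (at x)"
    and c: "c\<^sup>2 = 1/2" and init: "\<phi>' 0 = c * (1 - \<phi> 0 ^ 2)"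
  shows "\<phi>' x = c * (1 - \<phi> x ^ 2)"
proof -
  define v where "v x = \<phi>' x - c * (1 - \<phi> x ^ 2)" for x
  have "(v has_real_derivative (2 * c * \<phi> x) * v x) (at x)" for x
    unfolding v_def[abs_def]
    by (rule derivative_eq_intros \<phi>' \<phi>'' refl | simp)+
       (use c in \<open>simp add: algebra_simps power2_eq_square power3_eq_cube, algebra\<close>)
  moreover have "continuous_on UNIV \<phi>"
    using \<phi>' by (meson DERIV_isCont continuous_at_imp_continuous_on)
  then have "continuous_on UNIV (\<lambda>x. 2 * c * \<phi> x)"
    by (intro continuous_intros)
  ultimately have "v x = 0"
    by (rule linear_ode_zero_solution) (simp add: v_def init)
  then show ?thesis by (simp add: v_def)
qed

lemma double_well_first_integral:
  fixes \<phi> \<phi>' :: "real \<Rightarrow> real"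
  assumes \<phi>': "\<And>x. (\<phi> has_real_derivative \<phi>' x) (at x)"
    and \<phi>'': "\<And>x. (\<phi>' has_real_derivative \<phi> x ^ 3 - \<phi> x) (at x)"
    and "(\<phi> \<longlongrightarrow> 1) at_top" and "(\<phi>' \<longlongrightarrow> 0) at_top"
  shows "\<phi>' x ^ 2 = (1 - \<phi> x ^ 2)\<^sup>2 / 2"
proof -
  define G where "G x = (1 - \<phi> x ^ 2)\<^sup>2 / 4 - \<phi>' x ^ 2 / 2" for x
  have "(G has_real_derivative 0) (at x)" for x
    unfolding G_def[abs_def]
    by (rule derivative_eq_intros \<phi>' \<phi>'' refl | simp)+
       (simp add: algebra_simps power2_eq_square power3_eq_cube)
  moreover have "(G \<longlongrightarrow> (1 - 1 ^ 2)\<^sup>2 / 4 - 0 ^ 2 / 2) at_top"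
    unfolding G_def[abs_def] using assms(3,4) by (intro tendsto_intros) auto
  ultimately have "G x = 0" using DERIV_zero_tendsto_eq by fastforce
  then show ?thesis by (simp add: G_def)
qed

lemma double_well_heteroclinic:
  fixes \<phi> \<phi>' :: "real \<Rightarrow> real"
  assumes \<phi>': "\<And>x. (\<phi> has_real_derivative \<phi>' x) (at x)"
    and \<phi>'': "\<And>x. (\<phi>' has_real_derivative \<phi> x ^ 3 - \<phi> x) (at x)"
    and \<phi>0: "\<phi> 0 = 0" and lim: "(\<phi> \<longlongrightarrow> 1) at_top" "(\<phi>' \<longlongrightarrow> 0) at_top"
  shows "\<phi> x = tanh (x / sqrt 2)" and "\<phi>' x = (1 - \<phi> x ^ 2) / sqrt 2"
proof -
  define c where "c = \<phi>' 0"
  have c2: "c\<^sup>2 = 1/2"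
    using double_well_first_integral[OF \<phi>' \<phi>'' lim, of 0] by (simp add: c_def \<phi>0)
  have riccati: "\<phi>' x = c * (1 - \<phi> x ^ 2)" for x
    by (rule double_well_riccati[OF \<phi>' \<phi>'' c2]) (simp add: c_def \<phi>0)
  have tanh_c: "\<phi> x = tanh (c * x)" for x
    using tanh_ode_unique \<phi>' riccati \<phi>0 by metis
  have "c > 0"
  proof (rule ccontr)
    assume "\<not> c > 0"
    then have "eventually (\<lambda>x. \<phi> x \<le> 0) at_top"
      by (intro eventually_mono[OF eventually_ge_at_top[of 0]])
        (simp add: tanh_c mult_nonpos_nonneg)
    from tendsto_upperbound[OF lim(1) this] show False by simp
  qed
  with c2 have "c = 1 / sqrt 2"
    using real_sqrt_unique[of c "1/2"] by (simp add: real_sqrt_divide)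
  then show "\<phi> x = tanh (x / sqrt 2)" and "\<phi>' x = (1 - \<phi> x ^ 2) / sqrt 2"
    by (simp_all add: tanh_c riccati)
qed

lemma mass_balance_constant_velocity:
  fixes \<rho> :: "real \<Rightarrow> real" and u0 n :: "'a::real_inner"
  assumes "(\<rho> has_real_derivative deriv \<rho> x) (at x)"
    and "- deriv \<rho> x * V + vector_derivative (\<lambda>s. \<rho> s *\<^sub>R u0) (at x) \<bullet> n = 0"
  shows "deriv \<rho> x * (V - u0 \<bullet> n) = 0"
proof -
  have "((\<lambda>s. \<rho> s *\<^sub>R u0) has_vector_derivative deriv \<rho> x *\<^sub>R u0) (at x)"
    using has_vector_derivative_scaleR[OF assms(1) has_vector_derivative_const] by simp
  then have "vector_derivative (\<lambda>s. \<rho> s *\<^sub>R u0) (at x) = deriv \<rho> x *\<^sub>R u0"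
    by (rule vector_derivative_at)
  with assms(2) show ?thesis
    by (auto simp: right_diff_distrib)
qed

theorem lemma2p2:
  fixes n :: "real ^ 'N" and Vn \<nu> lam kk chi :: real
    and \<rho> \<phi> \<mu> \<theta> :: "real \<Rightarrow> real" and u :: "real \<Rightarrow> real ^ 'N"
    and \<rho>p \<rho>m :: real and up um :: "real ^ 'N"
  assumes n_unit: "norm n = 1"
    and \<nu>_pos: "\<nu> > 0" and lam_pos: "lam > 0" and kk_pos: "kk > 0"
    and chi_cases: "chi = 0 \<or> chi = 1"
    and smooth: "smooth_real \<rho>" "smooth_real u" "smooth_real \<phi>" "smooth_real \<mu>" "smooth_real \<theta>"
    and \<rho>_pos: "\<And>\<xi>. \<rho> \<xi> > 0"
    and eq_mass: "\<And>\<xi>. - deriv \<rho> \<xi> * Vn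
        + vector_derivative (\<lambda>s. \<rho> s *\<^sub>R u s) (at \<xi>) \<bullet> n = 0"
    and eq_mom: "\<And>\<xi>.
        deriv (\<lambda>s. (\<nu> + lam) * (vector_derivative u (at s) \<bullet> n)) \<xi> *\<^sub>R n
        + vector_derivative (\<lambda>s. \<nu> *\<^sub>R vector_derivative u (at s)) (at \<xi>)
        + ((1/4) * deriv (\<lambda>s. (\<phi> s ^ 2 - 1) ^ 2) \<xi>) *\<^sub>R n
        - ((1/2) * deriv (\<lambda>s. \<bar>deriv \<phi> s\<bar> ^ 2) \<xi>) *\<^sub>R n = 0"
    and eq_mu: "\<And>\<xi>. chi * \<rho> \<xi> * deriv \<phi> \<xi> * (Vn - u \<xi> \<bullet> n) = \<mu> \<xi>"
    and eq_chem: "\<And>\<xi>. \<rho> \<xi> * \<mu> \<xi> = - deriv (deriv \<phi>) \<xi> + \<phi> \<xi> ^ 3 - \<phi> \<xi>"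
    and eq_energy: "\<And>\<xi>. kk * deriv (deriv \<theta>) \<xi>
        + \<nu> * (norm (vector_derivative u (at \<xi>))) ^ 2
        + (\<nu> + lam) * \<bar>vector_derivative u (at \<xi>) \<bullet> n\<bar> ^ 2
        + chi * \<mu> \<xi> ^ 2 = 0"
    and lim_\<rho>: "(\<rho> \<longlongrightarrow> \<rho>p) at_top" "(\<rho> \<longlongrightarrow> \<rho>m) at_bot" "\<rho>p > 0" "\<rho>m > 0"
    and lim_u: "(u \<longlongrightarrow> up) at_top" "(u \<longlongrightarrow> um) at_bot"
    and lim_\<phi>: "(\<phi> \<longlongrightarrow> 1) at_top" "(\<phi> \<longlongrightarrow> -1) at_bot"
    and \<phi>_0: "\<phi> 0 = 0"
    and match_\<rho>: "((deriv \<rho>) \<longlongrightarrow> 0) at_top" "((deriv \<rho>) \<longlongrightarrow> 0) at_bot"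
    and match_u: "((\<lambda>s. vector_derivative u (at s)) \<longlongrightarrow> 0) at_top"
                 "((\<lambda>s. vector_derivative u (at s)) \<longlongrightarrow> 0) at_bot"
    and match_\<phi>: "((deriv \<phi>) \<longlongrightarrow> 0) at_top" "((deriv \<phi>) \<longlongrightarrow> 0) at_bot"
    and match_\<theta>: "((deriv \<theta>) \<longlongrightarrow> 0) at_top" "((deriv \<theta>) \<longlongrightarrow> 0) at_bot"
  shows "(\<forall>\<xi>. \<rho> \<xi> * (Vn - u \<xi> \<bullet> n) = \<rho>p * (Vn - up \<bullet> n)
              \<and> \<rho> \<xi> * (Vn - u \<xi> \<bullet> n) = \<rho>m * (Vn - um \<bullet> n))
       \<and> (\<forall>\<xi>. \<phi> \<xi> = tanh (\<xi> / sqrt 2))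
       \<and> (\<forall>\<xi>. vector_derivative u (at \<xi>) = 0)
       \<and> (\<forall>\<xi>. deriv \<theta> \<xi> = 0)
       \<and> (chi = 1 \<longrightarrow> (\<forall>\<xi>. Vn - u \<xi> \<bullet> n = 0))
       \<and> (chi = 0 \<longrightarrow> (\<forall>\<xi>. deriv \<rho> \<xi> * (Vn - u \<xi> \<bullet> n) = 0))"
proof -
  have \<rho>': "(\<rho> has_real_derivative deriv \<rho> x) (at x)" for x
    using smooth_real_DERIV[OF smooth(1)] .
  have \<phi>': "(\<phi> has_real_derivative deriv \<phi> x) (at x)"
    and \<phi>'': "(deriv \<phi> has_real_derivative deriv (deriv \<phi>) x) (at x)" for x
    using smooth_real_DERIV smooth_real_deriv smooth(3) by blast+
  have nonneg: "0 \<le> \<nu> * (norm (vector_derivative u (at x)))\<^sup>2"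
    "0 \<le> (\<nu> + lam) * \<bar>vector_derivative u (at x) \<bullet> n\<bar>\<^sup>2" "0 \<le> chi * \<mu> x ^ 2" for x
    using \<nu>_pos lam_pos chi_cases by auto
  have \<theta>'_zero: "deriv \<theta> x = 0" and no_dissipation:
    "\<nu> * (norm (vector_derivative u (at x)))\<^sup>2
       + ((\<nu> + lam) * \<bar>vector_derivative u (at x) \<bullet> n\<bar>\<^sup>2 + chi * \<mu> x ^ 2) = 0" for x
    using steady_heat_balance_no_dissipation[OF smooth(5) kk_pos eq_energy[unfolded add.assoc]
        _ match_\<theta>] nonneg by simp_all
  have u'_zero: "vector_derivative u (at x) = 0" and "chi * \<mu> x ^ 2 = 0" for x
    using no_dissipation[of x] nonneg[of x] \<nu>_pos by (simp_all add: add_nonneg_eq_0_iff)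
  then have \<mu>_zero: "\<mu> x = 0" for x
    using chi_cases eq_mu[of x] by auto
  have "(deriv \<phi> has_real_derivative \<phi> x ^ 3 - \<phi> x) (at x)" for x
    using \<phi>''[of x] by (rule DERIV_cong) (use eq_chem[of x] in \<open>simp add: \<mu>_zero\<close>)
  note profile = double_well_heteroclinic[OF \<phi>' this \<phi>_0 lim_\<phi>(1) match_\<phi>(1)]
  define u0 where "u0 = u 0"
  have u0: "u = (\<lambda>_. u0)"
    unfolding u0_def using smooth_real_has_vector_derivative[OF smooth(2)]
    by (intro has_vector_derivative_zero_imp_constant) (simp add: u'_zero)
  then have "up = u0" "um = u0"
    using lim_u by (simp_all add: tendsto_const_iff)
  define c where "c = Vn - u0 \<bullet> n"
  have flux: "deriv \<rho> x * c = 0" for x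
    unfolding c_def by (rule mass_balance_constant_velocity[OF \<rho>' eq_mass[unfolded u0]])
  have "\<rho> x * c = \<rho>p * c" "\<rho> x * c = \<rho>m * c" for x
    using DERIV_times_const_zero_tendsto[OF \<rho>' flux] lim_\<rho>(1,2) by simp_all
  moreover have "chi = 1 \<Longrightarrow> c = 0"
    using eq_mu[of 0] \<rho>_pos[of 0] profile(2)[of 0] by (simp add: \<mu>_zero \<phi>_0 u0 c_def)
  ultimately show ?thesis
    using profile(1) u'_zero \<theta>'_zero flux \<open>up = u0\<close> \<open>um = u0\<close> by (simp add: u0 c_def)
qed

end
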